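(* Let $X\in\mathcal L(V)$ be positive semidefinite with $r=\mathrm{rank}(X)$. Then for every irreducible type $\xi$, $A_\xi(X)\preceq r\,B_\xi(X)$ in the Loewner order. In particular, if $P$ is the orthogonal projector onto a $K$-dimensional subspace $\mathcal C\subseteq V$, then $A_\xi(P)\preceq K\,B_\xi(P)$.
   Context: Let $G$ be a group and $V$ a finite-dimensional complex Hilbert space with a unitary representation $\rho$ of $G$; $G$ acts on $\mathcal L(V)$ by conjugation, unitarily for $\langle X_1,X_2\rangle=\mathrm{Tr}(X_1^\dagger X_2)$. Let $\mathcal L(V)=\bigoplus_\xi\mathcal E_\xi$ be the isotypic decomposition, $m_\xi$ the multiplicity and $d_\xi$ the dimension of type $\xi$. Choose an orthogonal decomposition $\mathcal E_\xi=\bigoplus_{\alpha=1}^{m_\xi}\mathcal E_{\xi\alpha}$ into irreducibles, $G$-equivariant isometric isomorphisms $\phi^\xi_{1\alpha}:\mathcal E_{\xi1}\to\mathcal E_{\xi\alpha}$ ($\phi^\xi_{11}=\mathrm{id}$), an orthonormal basis $\{E_i^1\}_{i=1}^{d_\xi}$ of $\mathcal E_{\xi1}$, and put $E_i^\alpha=\phi^\xi_{1\alpha}(E_i^1)$. Matrix-valued enumerators: $[A_\xi(X)]_{\alpha\beta}=\sum_{i=1}^{d_\xi}\mathrm{Tr}(X^\dagger E_i^\beta)\mathrm{Tr}(X(E_i^\alpha)^\dagger)$ and $[B_\xi(X)]_{\alpha\beta}=\sum_{i=1}^{d_\xi}\mathrm{Tr}(X^\dagger(E_i^\alpha)^\dagger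 XE_i^\beta)$. For Hermitian matrices, $A\preceq B$ means $B-A$ is positive semidefinite. *)

theory Defs
  imports "Jordan_Normal_Form.Jordan_Normal_Form" "Jordan_Normal_Form.DL_Rank"
    "Jordan_Normal_Form.Schur_Decomposition" "HOL-Algebra.Group"
begin

text \<open>V = complex n-dimensional Hilbert space C^n with the standard inner product;
  L(V) = complex n x n matrices (carrier_mat n n).\<close>

definition unitary_mat :: "nat \<Rightarrow> complex mat \<Rightarrow> bool" where
  "unitary_mat n U \<longleftrightarrow> U \<in> carrier_mat n n \<and> mat_adjoint U * U = 1\<^sub>m n \<and> U * mat_adjoint U = 1\<^sub>m n"

definition unitary_rep :: "('g, 'b) monoid_scheme \<Rightarrow> nat \<Rightarrow> ('g \<Rightarrow> complex mat) \<Rightarrow> bool" where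
  "unitary_rep G n \<rho> \<longleftrightarrow> group G \<and> (\<forall>g\<in>carrier G. unitary_mat n (\<rho> g)) \<and>
     (\<forall>g\<in>carrier G. \<forall>h\<in>carrier G. \<rho> (g \<otimes>\<^bsub>G\<^esub> h) = \<rho> g * \<rho> h)"

definition mtrace :: "complex mat \<Rightarrow> complex" where
  "mtrace A = (\<Sum>i<dim_row A. A $$ (i, i))"

definition hs :: "complex mat \<Rightarrow> complex mat \<Rightarrow> complex" where
  "hs X Y = mtrace (mat_adjoint X * Y)"

definition conj_act :: "('g \<Rightarrow> complex mat) \<Rightarrow> 'g \<Rightarrow> complex mat \<Rightarrow> complex mat" where
  "conj_act \<rho> g X = \<rho> g * X * mat_adjoint (\<rho> g)"

definition subspace_L :: "nat \<Rightarrow> complex mat set \<Rightarrow> bool" where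
  "subspace_L n W \<longleftrightarrow> W \<subseteq> carrier_mat n n \<and> 0\<^sub>m n n \<in> W \<and>
     (\<forall>X\<in>W. \<forall>Y\<in>W. X + Y \<in> W) \<and> (\<forall>c. \<forall>X\<in>W. c \<cdot>\<^sub>m X \<in> W)"

definition span_L :: "nat \<Rightarrow> complex mat set \<Rightarrow> complex mat set" where
  "span_L n S = \<Inter>{W. subspace_L n W \<and> S \<subseteq> W}"

definition invariant_L :: "('g, 'b) monoid_scheme \<Rightarrow> ('g \<Rightarrow> complex mat) \<Rightarrow> complex mat set \<Rightarrow> bool" where
  "invariant_L G \<rho> W \<longleftrightarrow> (\<forall>g\<in>carrier G. \<forall>X\<in>W. conj_act \<rho> g X \<in> W)"

definition irreducible_L :: "('g, 'b) monoid_scheme \<Rightarrow> nat \<Rightarrow> ('g \<Rightarrow> complex mat) \<Rightarrow> complex mat set \<Rightarrow> bool" where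
  "irreducible_L G n \<rho> W \<longleftrightarrow> subspace_L n W \<and> invariant_L G \<rho> W \<and> W \<noteq> {0\<^sub>m n n} \<and>
     (\<forall>U. subspace_L n U \<and> U \<subseteq> W \<and> invariant_L G \<rho> U \<longrightarrow> U = {0\<^sub>m n n} \<or> U = W)"

definition linear_on_L :: "complex mat set \<Rightarrow> (complex mat \<Rightarrow> complex mat) \<Rightarrow> bool" where
  "linear_on_L W f \<longleftrightarrow> (\<forall>X\<in>W. \<forall>Y\<in>W. f (X + Y) = f X + f Y) \<and> (\<forall>c. \<forall>X\<in>W. f (c \<cdot>\<^sub>m X) = c \<cdot>\<^sub>m f X)"

definition equivariant_on_L :: "('g, 'b) monoid_scheme \<Rightarrow> ('g \<Rightarrow> complex mat) \<Rightarrow> complex mat set \<Rightarrow> (complex mat \<Rightarrow> complex mat) \<Rightarrow> bool" where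
  "equivariant_on_L G \<rho> W f \<longleftrightarrow> (\<forall>g\<in>carrier G. \<forall>X\<in>W. f (conj_act \<rho> g X) = conj_act \<rho> g (f X))"

definition rep_iso_L :: "('g, 'b) monoid_scheme \<Rightarrow> ('g \<Rightarrow> complex mat) \<Rightarrow> complex mat set \<Rightarrow> complex mat set \<Rightarrow> bool" where
  "rep_iso_L G \<rho> W U \<longleftrightarrow> (\<exists>f. linear_on_L W f \<and> bij_betw f W U \<and> equivariant_on_L G \<rho> W f)"

definition isotypic_L :: "('g, 'b) monoid_scheme \<Rightarrow> nat \<Rightarrow> ('g \<Rightarrow> complex mat) \<Rightarrow> complex mat set \<Rightarrow> complex mat set" where
  "isotypic_L G n \<rho> W = span_L n (\<Union>{U. irreducible_L G n \<rho> U \<and> rep_iso_L G \<rho> W U})"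

definition psd_mat :: "nat \<Rightarrow> complex mat \<Rightarrow> bool" where
  "psd_mat k M \<longleftrightarrow> M \<in> carrier_mat k k \<and> mat_adjoint M = M \<and>
     (\<forall>v\<in>carrier_vec k. \<exists>t::real. t \<ge> 0 \<and> conjugate v \<bullet> (M *\<^sub>v v) = complex_of_real t)"

definition loewner_le :: "nat \<Rightarrow> complex mat \<Rightarrow> complex mat \<Rightarrow> bool" where
  "loewner_le k A B \<longleftrightarrow> A \<in> carrier_mat k k \<and> B \<in> carrier_mat k k \<and> psd_mat k (B - A)"

text \<open>Matrix-valued enumerators; indices alpha, beta range over {0..<m} (alpha = 0 is the
  reference copy), i over {0..<d}; Eb alpha i = E_i^alpha.\<close>
definition enumA :: "nat \<Rightarrow> nat \<Rightarrow> (nat \<Rightarrow> nat \<Rightarrow> complex mat) \<Rightarrow> complex mat \<Rightarrow> complex mat" where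
  "enumA m d Eb X = mat m m (\<lambda>(\<alpha>, \<beta>). \<Sum>i<d. mtrace (mat_adjoint X * Eb \<beta> i) * mtrace (X * mat_adjoint (Eb \<alpha> i)))"

definition enumB :: "nat \<Rightarrow> nat \<Rightarrow> (nat \<Rightarrow> nat \<Rightarrow> complex mat) \<Rightarrow> complex mat \<Rightarrow> complex mat" where
  "enumB m d Eb X = mat m m (\<lambda>(\<alpha>, \<beta>). \<Sum>i<d. mtrace (mat_adjoint X * mat_adjoint (Eb \<alpha> i) * X * Eb \<beta> i))"

end

theory Submission
  imports Defs
begin

(* A positive semidefinite X of rank r is a sum of K <= r rank-one terms w_k w_k^dagger: peeling
   off the rank-one part along a nonzero diagonal entry leaves a positive semidefinite Schur
   complement of smaller rank.  For any matrix F put c_lk = w_l^dagger F w_k; then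
   Tr(X F^dagger) = sum_k conj c_kk and Tr(X F^dagger X F) = sum_{k,l} |c_lk|^2, so Cauchy-Schwarz
   gives |Tr(X F^dagger)|^2 <= r Tr(X F^dagger X F).  For a vector y, y^dagger (r B - A) y is the
   sum over i of these differences for F = G_i = sum_alpha y_alpha E_i^alpha, hence nonnegative.
   Only the matrices E_i^alpha enter. *)

lemma sum_rotate3:
  "(\<Sum>a\<in>A. \<Sum>b\<in>B. \<Sum>c\<in>C. f a b c) = (\<Sum>c\<in>C. \<Sum>a\<in>A. \<Sum>b\<in>B. f a b c)"
  by (subst sum.swap) (simp add: sum.swap[of _ B])

lemma sum_swap_pairs:
  "(\<Sum>a\<in>A. \<Sum>b\<in>B. \<Sum>c\<in>C. \<Sum>d\<in>D. f a b c d) = (\<Sum>c\<in>C. \<Sum>d\<in>D. \<Sum>a\<in>A. \<Sum>b\<in>B. f a b c d)"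
  by (subst sum_rotate3) (simp add: sum_rotate3[of _ B])

lemma square_sum_le_card_sum_squares: "(\<Sum>k<K. x k)\<^sup>2 \<le> real K * (\<Sum>k<K. (x k)\<^sup>2)"
  for x :: "nat \<Rightarrow> real"
proof -
  have "0 \<le> (\<Sum>j<K. \<Sum>k<K. (x j - x k)\<^sup>2)" by (intro sum_nonneg) simp
  also have "\<dots> = 2 * (real K * (\<Sum>k<K. (x k)\<^sup>2)) - 2 * (\<Sum>k<K. x k)\<^sup>2"
    by (simp add: power2_diff sum.distrib sum_subtractf sum_distrib_left sum_distrib_right
        power2_eq_square algebra_simps)
  finally show ?thesis by simp
qed


lemma index_mat_adjoint [simp]:
  "dim_row (mat_adjoint A) = dim_col A" "dim_col (mat_adjoint A) = dim_row A"
  "i < dim_col A \<Longrightarrow> j < dim_row A \<Longrightarrow> mat_adjoint A $$ (i,j) = cnj (A $$ (j,i))"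
  unfolding mat_adjoint_def by (simp_all add: mat_of_rows_def)

lemma mat_adjoint_carrier_mat [simp]:
  "(A :: complex mat) \<in> carrier_mat n m \<Longrightarrow> mat_adjoint A \<in> carrier_mat m n"
  unfolding carrier_mat_def by simp

lemma index_mult_mat_sum:
  "A \<in> carrier_mat k n \<Longrightarrow> B \<in> carrier_mat n l \<Longrightarrow> i < k \<Longrightarrow> j < l \<Longrightarrow>
    (A * B) $$ (i,j) = (\<Sum>c<n. A $$ (i,c) * B $$ (c,j))"
  by (simp add: scalar_prod_def atLeast0LessThan)


definition sesq_form :: "nat \<Rightarrow> complex mat \<Rightarrow> (nat \<Rightarrow> complex) \<Rightarrow> (nat \<Rightarrow> complex) \<Rightarrow> complex" where
  "sesq_form n X y u = (\<Sum>a<n. \<Sum>b<n. cnj (y a) * X $$ (a,b) * u b)"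

definition nonneg_form :: "nat \<Rightarrow> complex mat \<Rightarrow> bool" where
  "nonneg_form n X \<longleftrightarrow> (\<forall>y. Im (sesq_form n X y y) = 0 \<and> Re (sesq_form n X y y) \<ge> 0)"

lemma sesq_form_add_smult:
  "sesq_form n X (\<lambda>a. y a + s * u a) (\<lambda>a. y a + s * u a) =
   sesq_form n X y y + s * sesq_form n X y u + cnj s * sesq_form n X u y
     + s * cnj s * sesq_form n X u u"
  unfolding sesq_form_def by (simp add: algebra_simps sum.distrib sum_distrib_left)

lemma sesq_form_smult_diff:
  assumes "A \<in> carrier_mat m m" "B \<in> carrier_mat m m"
  shows "sesq_form m (c \<cdot>\<^sub>m B - A) y y = c * sesq_form m B y y - sesq_form m A y y"
  using assms unfolding sesq_form_def
  by (simp add: algebra_simps sum_subtractf sum_distrib_left)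

definition basis_fun :: "nat \<Rightarrow> nat \<Rightarrow> complex" where
  "basis_fun a c = (if c = a then 1 else 0)"

lemma sesq_form_basis_fun_right:
  assumes "b < n"
  shows "sesq_form n X y (basis_fun b) = (\<Sum>a<n. cnj (y a) * X $$ (a,b))"
proof -
  have "cnj (y a) * X $$ (a,c) * basis_fun b c = (if c = b then cnj (y a) * X $$ (a,b) else 0)"
    for a c
    by (simp add: basis_fun_def)
  then show ?thesis using assms unfolding sesq_form_def by (simp add: sum.delta)
qed

lemma sesq_form_basis_fun_left:
  assumes "a < n"
  shows "sesq_form n X (basis_fun a) u = (\<Sum>b<n. X $$ (a,b) * u b)"
proof -
  have "cnj (basis_fun a c) * X $$ (c,b) * u b = (if c = a then X $$ (a,b) * u b else 0)" for b c
    by (simp add: basis_fun_def)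
  then show ?thesis using assms unfolding sesq_form_def by (subst sum.swap) (simp add: sum.delta)
qed

lemma sesq_form_basis_fun:
  assumes "a < n" "b < n"
  shows "sesq_form n X (basis_fun a) (basis_fun b) = X $$ (a,b)"
proof -
  have "cnj (basis_fun a c) * X $$ (c,b) = (if c = a then X $$ (a,b) else 0)" for c
    by (simp add: basis_fun_def)
  then show ?thesis using assms by (simp add: sesq_form_basis_fun_right sum.delta)
qed

lemma hermitian_if_real_sesq_form:
  assumes real: "\<And>y. Im (sesq_form n X y y) = 0" and "a < n" "b < n"
  shows "X $$ (b,a) = cnj (X $$ (a,b))"
proof -
  have expand: "Im (X $$ (a,a) + s * X $$ (a,b) + cnj s * X $$ (b,a) + s * cnj s * X $$ (b,b)) = 0"
    for s
    using real[of "\<lambda>c. basis_fun a c + s * basis_fun b c"] assms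
    by (simp add: sesq_form_add_smult sesq_form_basis_fun)
  have diag: "Im (X $$ (a,a)) = 0" "Im (X $$ (b,b)) = 0"
    using real[of "basis_fun a"] real[of "basis_fun b"] assms by (simp_all add: sesq_form_basis_fun)
  have "Im (X $$ (a,b)) + Im (X $$ (b,a)) = 0" using expand[of 1] diag by simp
  moreover have "Re (X $$ (a,b)) - Re (X $$ (b,a)) = 0" using expand[of \<i>] diag by simp
  ultimately show ?thesis by (intro complex_eqI) simp_all
qed

lemma nonneg_form_hermitian:
  assumes "nonneg_form n X" "a < n" "b < n"
  shows "X $$ (b,a) = cnj (X $$ (a,b))"
  by (rule hermitian_if_real_sesq_form) (use assms in \<open>auto simp: nonneg_form_def\<close>)

lemma sesq_form_swap:
  assumes "nonneg_form n X"
  shows "sesq_form n X u y = cnj (sesq_form n X y u)"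
proof -
  have "cnj (sesq_form n X y u) = (\<Sum>a<n. \<Sum>b<n. y a * cnj (X $$ (a,b)) * cnj (u b))"
    by (simp add: sesq_form_def)
  also have "\<dots> = (\<Sum>a<n. \<Sum>b<n. cnj (u b) * X $$ (b,a) * y a)"
  proof (intro sum.cong refl)
    fix a b assume "a \<in> {..<n}" "b \<in> {..<n}"
    then have "X $$ (b,a) = cnj (X $$ (a,b))" using nonneg_form_hermitian[OF assms] by blast
    then show "y a * cnj (X $$ (a,b)) * cnj (u b) = cnj (u b) * X $$ (b,a) * y a" by simp
  qed
  also have "\<dots> = sesq_form n X u y" unfolding sesq_form_def by (rule sum.swap)
  finally show ?thesis by simp
qed

lemma sesq_form_cauchy_schwarz:
  assumes X: "nonneg_form n X"
  shows "(cmod (sesq_form n X y u))\<^sup>2 \<le> Re (sesq_form n X y y) * Re (sesq_form n X u u)"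
proof -
  define b where "b = sesq_form n X y u"
  define p where "p = Re (sesq_form n X y y)"
  define q where "q = Re (sesq_form n X u u)"
  have "q \<ge> 0" using X by (simp add: nonneg_form_def q_def)
  have q_real: "sesq_form n X u u = complex_of_real q"
    using X by (simp add: nonneg_form_def q_def complex_eq_iff)
  have norm_b: "b * cnj b = complex_of_real ((cmod b)\<^sup>2)"
    using complex_norm_square[of b] by simp
  have quadratic: "p + (t\<^sup>2 * q - 2 * t) * (cmod b)\<^sup>2 \<ge> 0" for t :: real
  proof -
    define s where "s = - complex_of_real t * cnj b"
    have "s * b + cnj s * cnj b + s * cnj s * complex_of_real q =
        complex_of_real (t\<^sup>2 * q - 2 * t) * (b * cnj b)"
      by (simp add: s_def algebra_simps power2_eq_square)
    then have "sesq_form n X (\<lambda>a. y a + s * u a) (\<lambda>a. y a + s * u a) =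
        sesq_form n X y y + complex_of_real ((t\<^sup>2 * q - 2 * t) * (cmod b)\<^sup>2)"
      unfolding sesq_form_add_smult sesq_form_swap[OF X, of u y] q_real b_def[symmetric] norm_b
      by (simp add: add.assoc)
    moreover have "Re (sesq_form n X (\<lambda>a. y a + s * u a) (\<lambda>a. y a + s * u a)) \<ge> 0"
      using X by (simp add: nonneg_form_def)
    ultimately show ?thesis by (simp add: p_def)
  qed
  have "(cmod b)\<^sup>2 \<le> p * q"
  proof (cases "q = 0")
    case True
    have "(cmod b)\<^sup>2 \<le> 0"
    proof (rule ccontr)
      assume "\<not> (cmod b)\<^sup>2 \<le> 0"
      then show False
        using quadratic[of "(p + 1) / (2 * (cmod b)\<^sup>2)"] True by (simp add: field_simps)
    qed
    then show ?thesis using True by simp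
  next
    case False
    with \<open>q \<ge> 0\<close> have "q > 0" by simp
    then show ?thesis using quadratic[of "1 / q"] by (simp add: field_simps power2_eq_square)
  qed
  then show ?thesis by (simp add: b_def p_def q_def)
qed

lemma sesq_form_cong:
  "(\<And>a. a < n \<Longrightarrow> y a = y' a) \<Longrightarrow> (\<And>a. a < n \<Longrightarrow> u a = u' a) \<Longrightarrow>
    sesq_form n X y u = sesq_form n X y' u'"
  unfolding sesq_form_def by (intro sum.cong) auto

lemma scalar_prod_conjugate_mult_mat_vec:
  assumes "v \<in> carrier_vec n" "u \<in> carrier_vec n" "X \<in> carrier_mat n n"
  shows "conjugate v \<bullet> (X *\<^sub>v u) = sesq_form n X (($) v) (($) u)"
  using assms unfolding sesq_form_def
  by (auto simp: sum_distrib_left atLeast0LessThan ac_simps scalar_prod_def intro!: sum.cong)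

lemma psd_mat_iff_nonneg_form:
  assumes X: "X \<in> carrier_mat n n"
  shows "psd_mat n X \<longleftrightarrow> nonneg_form n X"
proof
  assume psd: "psd_mat n X"
  show "nonneg_form n X" unfolding nonneg_form_def
  proof
    fix y
    obtain t :: real where "t \<ge> 0" "conjugate (vec n y) \<bullet> (X *\<^sub>v vec n y) = complex_of_real t"
      using psd unfolding psd_mat_def by fastforce
    moreover have "conjugate (vec n y) \<bullet> (X *\<^sub>v vec n y) = sesq_form n X y y"
      using X by (simp add: scalar_prod_conjugate_mult_mat_vec cong: sesq_form_cong)
    ultimately show "Im (sesq_form n X y y) = 0 \<and> Re (sesq_form n X y y) \<ge> 0" by auto
  qed
next
  assume nonneg: "nonneg_form n X"
  have "mat_adjoint X = X"
  proof (rule eq_matI)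
    fix a b assume "a < dim_row X" "b < dim_col X"
    then show "mat_adjoint X $$ (a,b) = X $$ (a,b)"
      using X nonneg_form_hermitian[OF nonneg, of b a] by simp
  qed (use X in auto)
  moreover have "\<exists>t::real. t \<ge> 0 \<and> conjugate v \<bullet> (X *\<^sub>v v) = complex_of_real t"
    if "v \<in> carrier_vec n" for v
    using nonneg that X unfolding nonneg_form_def
    by (intro exI[of _ "Re (sesq_form n X (($) v) (($) v))"])
      (simp add: scalar_prod_conjugate_mult_mat_vec complex_eq_iff)
  ultimately show "psd_mat n X" using X unfolding psd_mat_def by blast
qed

definition rank_one_sum :: "nat \<Rightarrow> complex mat \<Rightarrow> nat \<Rightarrow> (nat \<Rightarrow> nat \<Rightarrow> complex) \<Rightarrow> bool" where
  "rank_one_sum n X K w \<longleftrightarrow> (\<forall>a<n. \<forall>b<n. X $$ (a,b) = (\<Sum>k<K. w k a * cnj (w k b)))"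

lemma nonneg_form_rank_one_sum:
  assumes dec: "rank_one_sum n X K w"
  shows "nonneg_form n X"
proof -
  have "sesq_form n X y y = complex_of_real (\<Sum>k<K. (cmod (\<Sum>a<n. cnj (y a) * w k a))\<^sup>2)" for y
  proof -
    have "sesq_form n X y y = (\<Sum>a<n. \<Sum>b<n. \<Sum>k<K. (cnj (y a) * w k a) * cnj (cnj (y b) * w k b))"
      using dec unfolding sesq_form_def rank_one_sum_def
      by (simp add: sum_distrib_left sum_distrib_right ac_simps)
    also have "\<dots> = (\<Sum>k<K. (\<Sum>a<n. cnj (y a) * w k a) * cnj (\<Sum>b<n. cnj (y b) * w k b))"
      by (subst sum_rotate3) (simp add: sum_product)
    finally show ?thesis by (simp only: complex_norm_square[symmetric] of_real_sum)
  qed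
  then show ?thesis unfolding nonneg_form_def by (simp add: sum_nonneg)
qed

lemma psd_mat_projector:
  assumes P: "P \<in> carrier_mat n n" and idem: "P * P = P" and herm: "mat_adjoint P = P"
  shows "psd_mat n P"
proof -
  have "P $$ (a,b) = (\<Sum>c<n. P $$ (a,c) * cnj (P $$ (b,c)))" if "a < n" "b < n" for a b
  proof -
    have "P $$ (a,b) = (P * mat_adjoint P) $$ (a,b)" using idem herm by simp
    then show ?thesis
      using that P by (simp add: index_mult_mat_sum[of _ n n _ n] del: index_mult_mat)
  qed
  then have "rank_one_sum n P n (\<lambda>c a. P $$ (a,c))" unfolding rank_one_sum_def by blast
  then have "nonneg_form n P" by (rule nonneg_form_rank_one_sum)
  then show ?thesis using psd_mat_iff_nonneg_form[OF P] by simp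
qed


lemma (in vec_space) rank_less_if_span_cols_psubset:
  assumes A: "A \<in> carrier_mat n nc" and B: "B \<in> carrier_mat n nc'"
    and cols_B: "set (cols B) \<subseteq> span (set (cols A))"
    and x: "x \<in> set (cols A)" and x_notin: "x \<notin> span (set (cols B))"
  shows "rank B < rank A"
proof -
  have cols_A_carrier: "set (cols A) \<subseteq> carrier_vec n" using A cols_dim by blast
  have cols_B_carrier: "set (cols B) \<subseteq> carrier_vec n" using B cols_dim by blast
  obtain U where U: "maximal U (\<lambda>T. T \<subseteq> set (cols B) \<and> lin_indpt T)" "finite U"
    using maximal_exists_superset[of "set (cols B)" "\<lambda>T. T \<subseteq> set (cols B) \<and> lin_indpt T" "{}"]
    by (auto simp: lin_dep_def)
  have rank_B: "rank B = card U" using rank_card_indpt[OF B U(1)] .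
  have U_cols: "U \<subseteq> set (cols B)" and U_indpt: "lin_indpt U"
    using U(1) unfolding maximal_def by auto
  have U_carrier: "U \<subseteq> carrier_vec n" using U_cols cols_B_carrier by auto
  have x_notin_U: "x \<notin> span U" using x_notin span_is_monotone[OF U_cols] by auto
  have x_carrier: "x \<in> carrier_vec n" using x cols_A_carrier by auto
  have "x \<notin> U" using x_notin_U in_own_span[OF U_carrier] by auto
  have indpt: "lin_indpt (insert x U)"
    using lin_dep_iff_in_span[OF U_carrier U_indpt x_carrier \<open>x \<notin> U\<close>] x_notin_U by auto
  define W where "W = span (set (cols A))"
  have in_W: "insert x U \<subseteq> W"
    unfolding W_def using U_cols cols_B x in_own_span[OF cols_A_carrier] by auto
  have vs_W: "vectorspace class_ring (vs W)"
    using subspace_is_vs span_is_subspace[OF cols_A_carrier] unfolding W_def by auto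
  have fin_dim_W: "vectorspace.fin_dim class_ring (vs W)"
    unfolding W_def using fin_dim_span_cols[OF A] .
  have "LinearCombinations.module.lin_indpt class_ring (vs W) (insert x U)"
    using span_li_not_depend(2)[OF in_W] span_is_submodule[OF cols_A_carrier] indpt
    unfolding W_def by simp
  then have "card (insert x U) \<le> vectorspace.dim class_ring (vs W)"
    using vectorspace.li_le_dim(2)[OF vs_W fin_dim_W] in_W by simp
  then show ?thesis using rank_B \<open>x \<notin> U\<close> U(2) by (simp add: rank_def W_def)
qed

definition schur_compl :: "nat \<Rightarrow> complex mat \<Rightarrow> nat \<Rightarrow> complex mat" where
  "schur_compl n X i = mat n n (\<lambda>(a,b). X $$ (a,b) - X $$ (a,i) * X $$ (i,b) / X $$ (i,i))"

lemma nonneg_form_schur_compl: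
  assumes X: "nonneg_form n X" and i: "i < n"
  shows "nonneg_form n (schur_compl n X i)"
  unfolding nonneg_form_def
proof
  fix y
  define c where "c = sesq_form n X y (basis_fun i)"
  define d where "d = Re (X $$ (i,i))"
  have "Im (X $$ (i,i)) = 0" "d \<ge> 0"
    using X i unfolding nonneg_form_def d_def by (metis sesq_form_basis_fun)+
  then have X_ii: "X $$ (i,i) = complex_of_real d" by (simp add: complex_eq_iff d_def)
  have row_i: "(\<Sum>b<n. X $$ (i,b) * y b) = cnj c"
    using sesq_form_swap[OF X, of "basis_fun i" y] i
    by (simp add: c_def sesq_form_basis_fun_left)
  have "sesq_form n (schur_compl n X i) y y =
      sesq_form n X y y - (\<Sum>a<n. cnj (y a) * X $$ (a,i)) * (\<Sum>b<n. X $$ (i,b) * y b) / X $$ (i,i)"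
    unfolding sesq_form_def schur_compl_def
    by (simp add: algebra_simps sum_subtractf sum_distrib_left sum_distrib_right sum_divide_distrib)
  also have "\<dots> = sesq_form n X y y - complex_of_real ((cmod c)\<^sup>2 / d)"
    using complex_norm_square[of c] i
    by (simp add: row_i X_ii c_def sesq_form_basis_fun_right)
  finally have form: "sesq_form n (schur_compl n X i) y y =
      sesq_form n X y y - complex_of_real ((cmod c)\<^sup>2 / d)" .
  have "(cmod c)\<^sup>2 \<le> Re (sesq_form n X y y) * d"
    using sesq_form_cauchy_schwarz[OF X, of y "basis_fun i"] i
    by (simp add: c_def d_def sesq_form_basis_fun)
  then have "(cmod c)\<^sup>2 / d \<le> Re (sesq_form n X y y)"
    using \<open>d \<ge> 0\<close> X by (cases "d = 0") (simp_all add: divide_le_eq mult.commute nonneg_form_def)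
  then show "Im (sesq_form n (schur_compl n X i) y y) = 0 \<and>
      Re (sesq_form n (schur_compl n X i) y y) \<ge> 0"
    using X unfolding form nonneg_form_def by simp
qed

lemma rank_schur_compl_less:
  assumes X: "X \<in> carrier_mat n n" and i: "i < n" and X_ii: "X $$ (i,i) \<noteq> 0"
  shows "vec_space.rank n (schur_compl n X i) < vec_space.rank n X"
proof -
  interpret vs: vec_space "TYPE(complex)" n .
  define S where "S = schur_compl n X i"
  have S: "S \<in> carrier_mat n n" by (simp add: S_def schur_compl_def)
  have cols_X: "set (cols X) \<subseteq> carrier_vec n" using X cols_dim by blast
  have cols_S: "set (cols S) \<subseteq> carrier_vec n" using S cols_dim by blast
  have col_X_span: "col X j \<in> vs.span (set (cols X))" if "j < n" for j
  proof -
    have "col X j \<in> set (cols X)" using that X by (simp add: cols_def)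
    then show ?thesis using vs.in_own_span[OF cols_X] by blast
  qed
  have sub: "submodule class_ring (vs.span (set (cols X))) vs.V"
    by (rule vs.span_is_submodule[OF cols_X])
  have "col S j \<in> vs.span (set (cols X))" if j: "j < n" for j
  proof -
    have "col S j = col X j + (- X $$ (i,j) / X $$ (i,i)) \<cdot>\<^sub>v col X i"
      using j i X by (intro eq_vecI) (auto simp: S_def schur_compl_def)
    moreover have "(- X $$ (i,j) / X $$ (i,i)) \<cdot>\<^sub>v col X i \<in> vs.span (set (cols X))"
      using submodule.smult_closed[OF sub] col_X_span[OF i]
      by (simp add: module_vec_simps class_ring_simps)
    ultimately show ?thesis
      using submodule.m_closed[OF sub] col_X_span[OF j] by (simp add: module_vec_simps)
  qed
  then have cols_S_span: "set (cols S) \<subseteq> vs.span (set (cols X))"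
    using S by (auto simp: cols_def)
  have row_i_S: "v $ i = 0" if "v \<in> set (cols S)" for v
    using that i X_ii by (auto simp: S_def schur_compl_def cols_def)
  have "col X i \<in> set (cols X)" using i X by (simp add: cols_def)
  moreover have "col X i \<notin> vs.span (set (cols S))"
  proof
    assume "col X i \<in> vs.span (set (cols S))"
    then obtain a where "vs.lincomb a (set (cols S)) = col X i"
      using vs.finite_in_span[OF _ cols_S] by blast
    then have "col X i $ i = (\<Sum>v\<in>set (cols S). a v * v $ i)"
      using vs.lincomb_index[OF i cols_S] by metis
    also have "\<dots> = 0" by (simp add: row_i_S)
    finally show False using i X X_ii by simp
  qed
  ultimately show ?thesis
    unfolding S_def[symmetric] by (rule vs.rank_less_if_span_cols_psubset[OF X S cols_S_span])
qed

lemma nonneg_form_diag_zero: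
  assumes X: "nonneg_form n X" and "a < n" "b < n" and "X $$ (a,a) = 0"
  shows "X $$ (a,b) = 0"
  using sesq_form_cauchy_schwarz[OF X, of "basis_fun a" "basis_fun b"] assms
  by (simp add: sesq_form_basis_fun)

lemma nonneg_form_rank_one_decomposition:
  assumes "X \<in> carrier_mat n n" and "nonneg_form n X"
  shows "\<exists>K w. K \<le> vec_space.rank n X \<and> rank_one_sum n X K w"
  using assms
proof (induction "vec_space.rank n X" arbitrary: X rule: less_induct)
  case less
  note X = less.prems(1) and nonneg = less.prems(2)
  show ?case
  proof (cases "\<forall>i<n. X $$ (i,i) = 0")
    case True
    then have "\<forall>a<n. \<forall>b<n. X $$ (a,b) = 0" using nonneg_form_diag_zero[OF nonneg] by blast
    then show ?thesis by (intro exI[of _ 0]) (simp add: rank_one_sum_def)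
  next
    case False
    then obtain i where i: "i < n" and X_ii: "X $$ (i,i) \<noteq> 0" by blast
    define d where "d = Re (X $$ (i,i))"
    have "Im (X $$ (i,i)) = 0" "d \<ge> 0"
      using nonneg i unfolding nonneg_form_def d_def by (metis sesq_form_basis_fun)+
    then have X_ii_real: "X $$ (i,i) = complex_of_real (sqrt d) * complex_of_real (sqrt d)"
      by (simp add: complex_eq_iff d_def flip: of_real_mult)
    define w where "w a = X $$ (a,i) / complex_of_real (sqrt d)" for a
    have split: "X $$ (a,b) = schur_compl n X i $$ (a,b) + w a * cnj (w b)"
      if "a < n" "b < n" for a b
      using that i nonneg_form_hermitian[OF nonneg, of b i]
      by (simp add: schur_compl_def w_def X_ii_real)
    obtain K v where K: "K \<le> vec_space.rank n (schur_compl n X i)"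
      and dec: "rank_one_sum n (schur_compl n X i) K v"
      using less.hyps[OF rank_schur_compl_less[OF X i X_ii] _ nonneg_form_schur_compl[OF nonneg i]]
      by (auto simp: schur_compl_def)
    show ?thesis
    proof (intro exI conjI)
      show "Suc K \<le> vec_space.rank n X" using K rank_schur_compl_less[OF X i X_ii] by simp
      show "rank_one_sum n X (Suc K) (v(K := w))" unfolding rank_one_sum_def
      proof (intro allI impI)
        fix a b assume "a < n" "b < n"
        then show "X $$ (a,b) = (\<Sum>k<Suc K. (v(K := w)) k a * cnj ((v(K := w)) k b))"
          using dec by (simp add: split rank_one_sum_def)
      qed
    qed
  qed
qed


(* For entry functions F, H of matrices: tr_adj n X F = Tr(X F^dagger),
   tr_adj_sandwich n X F H = Tr(X F^dagger X H), rank_one_coeff n w F l k = w_l^dagger F w_k. *)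
definition tr_adj :: "nat \<Rightarrow> complex mat \<Rightarrow> (nat \<Rightarrow> nat \<Rightarrow> complex) \<Rightarrow> complex" where
  "tr_adj n X F = (\<Sum>a<n. \<Sum>b<n. X $$ (a,b) * cnj (F a b))"

definition tr_adj_sandwich ::
    "nat \<Rightarrow> complex mat \<Rightarrow> (nat \<Rightarrow> nat \<Rightarrow> complex) \<Rightarrow> (nat \<Rightarrow> nat \<Rightarrow> complex) \<Rightarrow> complex" where
  "tr_adj_sandwich n X F H =
    (\<Sum>a<n. \<Sum>c<n. (\<Sum>b<n. X $$ (a,b) * cnj (F c b)) * (\<Sum>d<n. X $$ (c,d) * H d a))"

definition rank_one_coeff ::
    "nat \<Rightarrow> (nat \<Rightarrow> nat \<Rightarrow> complex) \<Rightarrow> (nat \<Rightarrow> nat \<Rightarrow> complex) \<Rightarrow> nat \<Rightarrow> nat \<Rightarrow> complex" where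
  "rank_one_coeff n w F l k = (\<Sum>a<n. \<Sum>b<n. cnj (w l a) * F a b * w k b)"

lemma tr_adj_rank_one_sum:
  assumes dec: "rank_one_sum n X K w"
  shows "tr_adj n X F = (\<Sum>k<K. cnj (rank_one_coeff n w F k k))"
proof -
  have "tr_adj n X F = (\<Sum>a<n. \<Sum>b<n. \<Sum>k<K. w k a * cnj (w k b) * cnj (F a b))"
    using dec unfolding tr_adj_def rank_one_sum_def by (simp add: sum_distrib_right)
  also have "\<dots> = (\<Sum>k<K. cnj (rank_one_coeff n w F k k))"
    by (subst sum_rotate3) (simp add: rank_one_coeff_def ac_simps)
  finally show ?thesis .
qed

lemma tr_adj_sandwich_rank_one_sum:
  assumes dec: "rank_one_sum n X K w"
  shows "tr_adj_sandwich n X F H =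
    (\<Sum>k<K. \<Sum>l<K. cnj (rank_one_coeff n w F l k) * rank_one_coeff n w H l k)"
proof -
  have left: "(\<Sum>b<n. X $$ (a,b) * cnj (F c b)) = (\<Sum>k<K. w k a * cnj (\<Sum>b<n. F c b * w k b))"
    if "a < n" for a c
    using that dec unfolding rank_one_sum_def
    by (simp add: sum_distrib_left sum_distrib_right ac_simps) (rule sum.swap)
  have right: "(\<Sum>d<n. X $$ (c,d) * H d a) = (\<Sum>l<K. w l c * (\<Sum>d<n. cnj (w l d) * H d a))"
    if "c < n" for a c
    using that dec unfolding rank_one_sum_def
    by (simp add: sum_distrib_left sum_distrib_right ac_simps) (rule sum.swap)
  have coeff_F: "(\<Sum>c<n. cnj (\<Sum>b<n. F c b * w k b) * w l c) = cnj (rank_one_coeff n w F l k)" for k l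
    by (simp add: rank_one_coeff_def sum_distrib_left sum_distrib_right ac_simps)
  have coeff_H: "(\<Sum>a<n. (\<Sum>d<n. cnj (w l d) * H d a) * w k a) = rank_one_coeff n w H l k" for k l
    unfolding rank_one_coeff_def
    by (subst sum.swap) (simp add: sum_distrib_left sum_distrib_right ac_simps)
  have "tr_adj_sandwich n X F H = (\<Sum>a<n. \<Sum>c<n. (\<Sum>k<K. w k a * cnj (\<Sum>b<n. F c b * w k b)) *
      (\<Sum>l<K. w l c * (\<Sum>d<n. cnj (w l d) * H d a)))"
    unfolding tr_adj_sandwich_def by (intro sum.cong refl) (simp add: left right)
  also have "\<dots> = (\<Sum>a<n. \<Sum>c<n. \<Sum>k<K. \<Sum>l<K.
      ((\<Sum>d<n. cnj (w l d) * H d a) * w k a) * (cnj (\<Sum>b<n. F c b * w k b) * w l c))"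
    by (simp only: sum_product) (simp add: ac_simps)
  also have "\<dots> = (\<Sum>k<K. \<Sum>l<K. \<Sum>a<n. \<Sum>c<n.
      ((\<Sum>d<n. cnj (w l d) * H d a) * w k a) * (cnj (\<Sum>b<n. F c b * w k b) * w l c))"
    by (rule sum_swap_pairs)
  also have "\<dots> = (\<Sum>k<K. \<Sum>l<K. (\<Sum>a<n. (\<Sum>d<n. cnj (w l d) * H d a) * w k a) *
      (\<Sum>c<n. cnj (\<Sum>b<n. F c b * w k b) * w l c))"
    by (simp add: sum_product)
  also have "\<dots> = (\<Sum>k<K. \<Sum>l<K. cnj (rank_one_coeff n w F l k) * rank_one_coeff n w H l k)"
    unfolding coeff_F coeff_H by (simp add: mult.commute)
  finally show ?thesis .
qed

lemma norm_tr_adj_squared_le_num_terms: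
  assumes dec: "rank_one_sum n X K w"
  obtains q where "tr_adj_sandwich n X F F = complex_of_real q" "q \<ge> 0"
    "(cmod (tr_adj n X F))\<^sup>2 \<le> real K * q"
proof
  define c where "c = rank_one_coeff n w F"
  define q where "q = (\<Sum>k<K. \<Sum>l<K. (cmod (c l k))\<^sup>2)"
  have norm_square: "cnj z * z = complex_of_real ((cmod z)\<^sup>2)" for z
    using complex_norm_square[of z] by (simp add: mult.commute)
  show "tr_adj_sandwich n X F F = complex_of_real q"
    unfolding tr_adj_sandwich_rank_one_sum[OF dec] q_def c_def norm_square by simp
  show "q \<ge> 0" by (simp add: q_def sum_nonneg)
  have "cmod (tr_adj n X F) \<le> (\<Sum>k<K. cmod (c k k))"
    unfolding tr_adj_rank_one_sum[OF dec] c_def by (rule order_trans[OF norm_sum]) simp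
  then have "(cmod (tr_adj n X F))\<^sup>2 \<le> (\<Sum>k<K. cmod (c k k))\<^sup>2"
    by (simp add: power_mono)
  also have "\<dots> \<le> real K * (\<Sum>k<K. (cmod (c k k))\<^sup>2)"
    by (rule square_sum_le_card_sum_squares)
  also have "\<dots> \<le> real K * q"
    unfolding q_def by (intro mult_left_mono sum_mono member_le_sum) auto
  finally show "(cmod (tr_adj n X F))\<^sup>2 \<le> real K * q" .
qed

lemma norm_tr_adj_squared_le_rank:
  assumes psd: "psd_mat n X"
  obtains q where "tr_adj_sandwich n X F F = complex_of_real q"
    "(cmod (tr_adj n X F))\<^sup>2 \<le> real (vec_space.rank n X) * q"
proof -
  have X: "X \<in> carrier_mat n n" using psd by (simp add: psd_mat_def)
  obtain K w where K: "K \<le> vec_space.rank n X"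
    and dec: "rank_one_sum n X K w"
    using nonneg_form_rank_one_decomposition[OF X] psd psd_mat_iff_nonneg_form[OF X] by blast
  obtain q where q: "tr_adj_sandwich n X F F = complex_of_real q" "q \<ge> 0"
    and le: "(cmod (tr_adj n X F))\<^sup>2 \<le> real K * q"
    using norm_tr_adj_squared_le_num_terms[OF dec] by blast
  have "real K * q \<le> real (vec_space.rank n X) * q" using K q(2) by (simp add: mult_right_mono)
  with q(1) le that show ?thesis by simp
qed

lemma tr_adj_lincomb:
  "tr_adj n X (\<lambda>a b. \<Sum>\<alpha><m. y \<alpha> * F \<alpha> a b) = (\<Sum>\<alpha><m. cnj (y \<alpha>) * tr_adj n X (F \<alpha>))"
proof -
  have "tr_adj n X (\<lambda>a b. \<Sum>\<alpha><m. y \<alpha> * F \<alpha> a b) =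
      (\<Sum>a<n. \<Sum>b<n. \<Sum>\<alpha><m. cnj (y \<alpha>) * (X $$ (a,b) * cnj (F \<alpha> a b)))"
    by (simp add: tr_adj_def sum_distrib_left ac_simps)
  also have "\<dots> = (\<Sum>\<alpha><m. cnj (y \<alpha>) * tr_adj n X (F \<alpha>))"
    by (subst sum_rotate3) (simp add: tr_adj_def sum_distrib_left)
  finally show ?thesis .
qed

lemma tr_adj_sandwich_lincomb:
  "tr_adj_sandwich n X (\<lambda>a b. \<Sum>\<alpha><m. y \<alpha> * F \<alpha> a b) (\<lambda>a b. \<Sum>\<beta><m. y \<beta> * F \<beta> a b)
   = (\<Sum>\<alpha><m. \<Sum>\<beta><m. cnj (y \<alpha>) * y \<beta> * tr_adj_sandwich n X (F \<alpha>) (F \<beta>))"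
proof -
  define Z where "Z \<alpha> a c = (\<Sum>b<n. X $$ (a,b) * cnj (F \<alpha> c b))" for \<alpha> a c
  define Y where "Y \<beta> c a = (\<Sum>d<n. X $$ (c,d) * F \<beta> d a)" for \<beta> c a
  have Z_lincomb: "(\<Sum>b<n. X $$ (a,b) * cnj (\<Sum>\<alpha><m. y \<alpha> * F \<alpha> c b)) = (\<Sum>\<alpha><m. cnj (y \<alpha>) * Z \<alpha> a c)"
    for a c unfolding Z_def
    by (simp add: sum_distrib_left ac_simps) (rule sum.swap)
  have Y_lincomb: "(\<Sum>d<n. X $$ (c,d) * (\<Sum>\<beta><m. y \<beta> * F \<beta> d a)) = (\<Sum>\<beta><m. y \<beta> * Y \<beta> c a)"
    for a c unfolding Y_def
    by (simp add: sum_distrib_left ac_simps) (rule sum.swap)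
  have "tr_adj_sandwich n X (\<lambda>a b. \<Sum>\<alpha><m. y \<alpha> * F \<alpha> a b) (\<lambda>a b. \<Sum>\<beta><m. y \<beta> * F \<beta> a b)
     = (\<Sum>a<n. \<Sum>c<n. \<Sum>\<alpha><m. \<Sum>\<beta><m. cnj (y \<alpha>) * y \<beta> * (Z \<alpha> a c * Y \<beta> c a))"
    unfolding tr_adj_sandwich_def Z_lincomb Y_lincomb
    by (simp only: sum_product) (simp add: ac_simps)
  also have "\<dots> = (\<Sum>\<alpha><m. \<Sum>\<beta><m. \<Sum>a<n. \<Sum>c<n. cnj (y \<alpha>) * y \<beta> * (Z \<alpha> a c * Y \<beta> c a))"
    by (rule sum_swap_pairs)
  also have "\<dots> = (\<Sum>\<alpha><m. \<Sum>\<beta><m. cnj (y \<alpha>) * y \<beta> * tr_adj_sandwich n X (F \<alpha>) (F \<beta>))"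
    by (simp add: tr_adj_sandwich_def Z_def Y_def sum_distrib_left)
  finally show ?thesis .
qed

lemma mtrace_mult_adjoint:
  assumes "X \<in> carrier_mat n n" "E \<in> carrier_mat n n"
  shows "mtrace (X * mat_adjoint E) = tr_adj n X (\<lambda>a b. E $$ (a,b))"
  using assms unfolding mtrace_def tr_adj_def
  by (auto simp: scalar_prod_def atLeast0LessThan intro!: sum.cong)

lemma mtrace_adjoint_mult:
  assumes "X \<in> carrier_mat n n" "E \<in> carrier_mat n n"
  shows "mtrace (mat_adjoint X * E) = cnj (tr_adj n X (\<lambda>a b. E $$ (a,b)))"
  using assms unfolding mtrace_def tr_adj_def
  by (auto simp: scalar_prod_def atLeast0LessThan intro: sum.swap)

lemma mtrace_sandwich:
  assumes X: "X \<in> carrier_mat n n" and E: "E \<in> carrier_mat n n" "E' \<in> carrier_mat n n"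
  shows "mtrace (X * mat_adjoint E * X * E') =
    tr_adj_sandwich n X (\<lambda>a b. E $$ (a,b)) (\<lambda>a b. E' $$ (a,b))"
proof -
  have XE: "X * mat_adjoint E \<in> carrier_mat n n" and XEX: "X * mat_adjoint E * X \<in> carrier_mat n n"
    using assms by auto
  have "(X * mat_adjoint E * X * E') $$ (a,a) =
      (\<Sum>c<n. (\<Sum>b<n. X $$ (a,b) * cnj (E $$ (c,b))) * (\<Sum>d<n. X $$ (c,d) * E' $$ (d,a)))"
    if "a < n" for a
  proof -
    have "(X * mat_adjoint E * X * E') $$ (a,a) =
        (\<Sum>d<n. (\<Sum>c<n. (\<Sum>b<n. X $$ (a,b) * cnj (E $$ (c,b))) * X $$ (c,d)) * E' $$ (d,a))"
      using that assms XE XEX by (simp add: index_mult_mat_sum[of _ n n _ n] del: index_mult_mat)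
    also have "\<dots> = (\<Sum>c<n. \<Sum>d<n. (\<Sum>b<n. X $$ (a,b) * cnj (E $$ (c,b))) * (X $$ (c,d) * E' $$ (d,a)))"
      by (subst sum.swap) (simp add: sum_distrib_left sum_distrib_right ac_simps)
    finally show ?thesis by (simp add: sum_distrib_left)
  qed
  then show ?thesis using X unfolding mtrace_def tr_adj_sandwich_def by simp
qed


lemma sesq_form_enumA:
  assumes X: "X \<in> carrier_mat n n" and Eb: "\<And>\<alpha> i. \<alpha> < m \<Longrightarrow> i < d \<Longrightarrow> Eb \<alpha> i \<in> carrier_mat n n"
  shows "sesq_form m (enumA m d Eb X) y y =
    (\<Sum>i<d. tr_adj n X (\<lambda>a b. \<Sum>\<alpha><m. y \<alpha> * Eb \<alpha> i $$ (a,b)) *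
            cnj (tr_adj n X (\<lambda>a b. \<Sum>\<alpha><m. y \<alpha> * Eb \<alpha> i $$ (a,b))))"
proof -
  define L where "L \<alpha> i = tr_adj n X (\<lambda>a b. Eb \<alpha> i $$ (a,b))" for \<alpha> i
  have "sesq_form m (enumA m d Eb X) y y =
      (\<Sum>\<alpha><m. \<Sum>\<beta><m. \<Sum>i<d. (cnj (y \<alpha>) * L \<alpha> i) * (y \<beta> * cnj (L \<beta> i)))"
    unfolding sesq_form_def using X Eb
    by (intro sum.cong refl)
      (simp add: enumA_def L_def mtrace_mult_adjoint mtrace_adjoint_mult sum_distrib_left
        sum_distrib_right ac_simps)
  also have "\<dots> = (\<Sum>i<d. (\<Sum>\<alpha><m. cnj (y \<alpha>) * L \<alpha> i) * (\<Sum>\<beta><m. y \<beta> * cnj (L \<beta> i)))"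
    by (subst sum_rotate3) (simp add: sum_product)
  finally show ?thesis by (simp add: tr_adj_lincomb L_def)
qed

lemma sesq_form_enumB:
  assumes X: "X \<in> carrier_mat n n" "mat_adjoint X = X"
    and Eb: "\<And>\<alpha> i. \<alpha> < m \<Longrightarrow> i < d \<Longrightarrow> Eb \<alpha> i \<in> carrier_mat n n"
  shows "sesq_form m (enumB m d Eb X) y y =
    (\<Sum>i<d. tr_adj_sandwich n X (\<lambda>a b. \<Sum>\<alpha><m. y \<alpha> * Eb \<alpha> i $$ (a,b))
                                (\<lambda>a b. \<Sum>\<alpha><m. y \<alpha> * Eb \<alpha> i $$ (a,b)))"
proof -
  define T where "T \<alpha> \<beta> i = tr_adj_sandwich n X (\<lambda>a b. Eb \<alpha> i $$ (a,b)) (\<lambda>a b. Eb \<beta> i $$ (a,b))"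
    for \<alpha> \<beta> i
  have "sesq_form m (enumB m d Eb X) y y = (\<Sum>\<alpha><m. \<Sum>\<beta><m. \<Sum>i<d. cnj (y \<alpha>) * y \<beta> * T \<alpha> \<beta> i)"
    unfolding sesq_form_def using X Eb
    by (intro sum.cong refl)
      (simp add: enumB_def T_def mtrace_sandwich sum_distrib_left sum_distrib_right ac_simps)
  also have "\<dots> = (\<Sum>i<d. \<Sum>\<alpha><m. \<Sum>\<beta><m. cnj (y \<alpha>) * y \<beta> * T \<alpha> \<beta> i)"
    by (rule sum_rotate3)
  finally show ?thesis by (simp add: tr_adj_sandwich_lincomb T_def)
qed

lemma loewner_le_enumA_rank_enumB:
  assumes psd: "psd_mat n X" and Eb: "\<And>\<alpha> i. \<alpha> < m \<Longrightarrow> i < d \<Longrightarrow> Eb \<alpha> i \<in> carrier_mat n n"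
  shows "loewner_le m (enumA m d Eb X) (of_nat (vec_space.rank n X) \<cdot>\<^sub>m enumB m d Eb X)"
proof -
  have X: "X \<in> carrier_mat n n" "mat_adjoint X = X" using psd by (simp_all add: psd_mat_def)
  define r where "r = vec_space.rank n X"
  have A: "enumA m d Eb X \<in> carrier_mat m m" and B: "enumB m d Eb X \<in> carrier_mat m m"
    by (simp_all add: enumA_def enumB_def)
  have "nonneg_form m (of_nat r \<cdot>\<^sub>m enumB m d Eb X - enumA m d Eb X)"
    unfolding nonneg_form_def
  proof
    fix y
    define G where "G i = (\<lambda>a b. \<Sum>\<alpha><m. y \<alpha> * Eb \<alpha> i $$ (a,b))" for i
    define D where
      "D i = of_nat r * tr_adj_sandwich n X (G i) (G i) - tr_adj n X (G i) * cnj (tr_adj n X (G i))"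
      for i
    have D: "Im (D i) = 0 \<and> Re (D i) \<ge> 0" for i
    proof -
      obtain q where q: "tr_adj_sandwich n X (G i) (G i) = complex_of_real q"
        and le: "(cmod (tr_adj n X (G i)))\<^sup>2 \<le> real r * q"
        using norm_tr_adj_squared_le_rank[OF psd] unfolding r_def by blast
      have "D i = complex_of_real (real r * q - (cmod (tr_adj n X (G i)))\<^sup>2)"
        unfolding D_def q complex_norm_square[symmetric] by simp
      with le show ?thesis by simp
    qed
    have "sesq_form m (of_nat r \<cdot>\<^sub>m enumB m d Eb X - enumA m d Eb X) y y = (\<Sum>i<d. D i)"
      using sesq_form_enumA[OF X(1) Eb, where y = y] sesq_form_enumB[OF X Eb, where y = y]
      by (simp add: sesq_form_smult_diff[OF A B] D_def G_def sum_subtractf sum_distrib_left)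
    then show "Im (sesq_form m (of_nat r \<cdot>\<^sub>m enumB m d Eb X - enumA m d Eb X) y y) = 0 \<and>
        Re (sesq_form m (of_nat r \<cdot>\<^sub>m enumB m d Eb X - enumA m d Eb X) y y) \<ge> 0"
      using D by (simp add: sum_nonneg)
  qed
  then show ?thesis
    using A B psd_mat_iff_nonneg_form[OF minus_carrier_mat[OF A]]
    unfolding loewner_le_def r_def by simp
qed

theorem mainTheorem18:
  fixes G :: "('g, 'b) monoid_scheme" and n :: nat and \<rho> :: "'g \<Rightarrow> complex mat"
    and m d :: nat and Es :: "nat \<Rightarrow> complex mat set"
    and \<phi> :: "nat \<Rightarrow> complex mat \<Rightarrow> complex mat" and E :: "nat \<Rightarrow> complex mat"
  assumes rep: "unitary_rep G n \<rho>"
    and m_pos: "m \<ge> 1"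
    and irr: "\<forall>\<alpha><m. irreducible_L G n \<rho> (Es \<alpha>)"
    and orth: "\<forall>\<alpha><m. \<forall>\<beta><m. \<alpha> \<noteq> \<beta> \<longrightarrow> (\<forall>X\<in>Es \<alpha>. \<forall>Y\<in>Es \<beta>. hs X Y = 0)"
    and isotypic: "span_L n (\<Union>\<alpha><m. Es \<alpha>) = isotypic_L G n \<rho> (Es 0)"
    and phi_lin: "\<forall>\<alpha><m. linear_on_L (Es 0) (\<phi> \<alpha>)"
    and phi_bij: "\<forall>\<alpha><m. bij_betw (\<phi> \<alpha>) (Es 0) (Es \<alpha>)"
    and phi_equiv: "\<forall>\<alpha><m. equivariant_on_L G \<rho> (Es 0) (\<phi> \<alpha>)"
    and phi_isom: "\<forall>\<alpha><m. \<forall>X\<in>Es 0. \<forall>Y\<in>Es 0. hs (\<phi> \<alpha> X) (\<phi> \<alpha> Y) = hs X Y"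
    and phi_id: "\<forall>X\<in>Es 0. \<phi> 0 X = X"
    and E_in: "\<forall>i<d. E i \<in> Es 0"
    and E_orthonormal: "\<forall>i<d. \<forall>j<d. hs (E i) (E j) = (if i = j then 1 else 0)"
    and E_span: "span_L n (E ` {..<d}) = Es 0"
  shows "(\<forall>X. psd_mat n X \<longrightarrow>
            loewner_le m (enumA m d (\<lambda>\<alpha> i. \<phi> \<alpha> (E i)) X)
              (of_nat (vec_space.rank n X) \<cdot>\<^sub>m enumB m d (\<lambda>\<alpha> i. \<phi> \<alpha> (E i)) X))
       \<and> (\<forall>P K. P \<in> carrier_mat n n \<and> P * P = P \<and> mat_adjoint P = P \<and> vec_space.rank n P = K \<longrightarrow>
            loewner_le m (enumA m d (\<lambda>\<alpha> i. \<phi> \<alpha> (E i)) P)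
              (of_nat K \<cdot>\<^sub>m enumB m d (\<lambda>\<alpha> i. \<phi> \<alpha> (E i)) P))"
proof -
  have E_carrier: "\<phi> \<alpha> (E i) \<in> carrier_mat n n" if "\<alpha> < m" "i < d" for \<alpha> i
  proof -
    have "\<phi> \<alpha> (E i) \<in> Es \<alpha>" using phi_bij E_in that by (meson bij_betw_apply)
    moreover have "Es \<alpha> \<subseteq> carrier_mat n n"
      using irr that unfolding irreducible_L_def subspace_L_def by auto
    ultimately show ?thesis by blast
  qed
  show ?thesis
  proof (intro conjI allI impI)
    fix X assume "psd_mat n X"
    then show "loewner_le m (enumA m d (\<lambda>\<alpha> i. \<phi> \<alpha> (E i)) X)
        (of_nat (vec_space.rank n X) \<cdot>\<^sub>m enumB m d (\<lambda>\<alpha> i. \<phi> \<alpha> (E i)) X)"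
      using E_carrier by (rule loewner_le_enumA_rank_enumB)
  next
    fix P :: "complex mat" and K :: nat
    assume P: "P \<in> carrier_mat n n \<and> P * P = P \<and> mat_adjoint P = P \<and> vec_space.rank n P = K"
    then have "psd_mat n P" by (intro psd_mat_projector) auto
    from loewner_le_enumA_rank_enumB[OF this E_carrier] P
    show "loewner_le m (enumA m d (\<lambda>\<alpha> i. \<phi> \<alpha> (E i)) P)
        (of_nat K \<cdot>\<^sub>m enumB m d (\<lambda>\<alpha> i. \<phi> \<alpha> (E i)) P)" by simp
  qed
qed

end
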